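(* Let $N$ be a positive even integer and let $\sigma\colon\{0,1\}^*\to\{0,1,\#\}^*$ be the substitution defined by $\sigma(0)=\#0^{N-1}$ and $\sigma(1)=\#1^{N-1}$. Let $\mathbf{w}$ be an infinite binary word. If an abelian power $u_0\cdots u_{e-1}$ with $e\ge N$ occurs in $\sigma(\mathbf{w})$, then $\mathbf{w}$ contains an abelian power $v_0\cdots v_{e-1}$ with $|v_0|=|u_0|/N$.
   Context: Two finite words $u,v$ are abelian equivalent, written $u\sim v$, if they are permutations of each other. An abelian power of exponent $e$ (a positive integer) and period $m$ is a word of the form $u_0u_1\cdots u_{e-1}$ where $u_0,\dots,u_{e-1}$ are nonempty, pairwise abelian equivalent, and $m=|u_0|$. The image $\sigma(\mathbf{w})$ of an infinite word is obtained by applying $\sigma$ letter by letter. *)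

theory Defs
  imports Main "HOL-Library.Multiset"
begin

text \<open>The binary alphabet {0,1} is rendered as bool (False = 0, True = 1);
  the alphabet {0,1,#} is rendered as bool option (None = #, Some b = b).\<close>

definition abelian_equiv :: "'a list \<Rightarrow> 'a list \<Rightarrow> bool" where
  "abelian_equiv u v \<longleftrightarrow> mset u = mset v"

text \<open>The list us = [u_0,...,u_(e-1)] of blocks is an abelian power of
  exponent e and period m; the word itself is concat us.\<close>
definition abelian_power :: "'a list list \<Rightarrow> nat \<Rightarrow> nat \<Rightarrow> bool" where
  "abelian_power us e m \<longleftrightarrow>
     e > 0 \<and> length us = e \<and> (\<forall>u\<in>set us. u \<noteq> []) \<and>
     (\<forall>u\<in>set us. \<forall>v\<in>set us. abelian_equiv u v) \<and> m = length (hd us)"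

definition occurs_in :: "'a list \<Rightarrow> (nat \<Rightarrow> 'a) \<Rightarrow> bool" where
  "occurs_in u x \<longleftrightarrow> (\<exists>i. u = map x [i..<i + length u])"

text \<open>Image of the infinite binary word w under sigma(0) = # 0^(N-1),
  sigma(1) = # 1^(N-1).\<close>
definition sigma_img :: "nat \<Rightarrow> (nat \<Rightarrow> bool) \<Rightarrow> nat \<Rightarrow> bool option" where
  "sigma_img N w i = (if i mod N = 0 then None else Some (w (i div N)))"

end

theory Submission
  imports Defs
begin

text \<open>Every N-th letter of sigma(w) is #, so a factor of length N m contains exactly m letters #.
  Among N consecutive blocks of the abelian power each block contributes the same number h of #,
  hence m = N h. With m = N q and the power starting at position a N + s, block i is the image of
  v_i = w[a + iq, a + (i+1)q) shifted by s, and counting 1s gives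
    (N - 1) |v_i|_1 + (s - 1) (w(a + (i+1)q) - w(a + iq)) = const.
  Subtracting consecutive equations, the odd number N - 1 would have to divide (s - 1) times a
  second difference of bits, which is impossible unless that term vanishes; so all |v_i|_1 agree
  and the blocks v_i of w are abelian equivalent.\<close>

lemma count_mset_upt_split:
  assumes "a \<le> b" "b \<le> c"
  shows "count (mset (map f [a..<c])) x = count (mset (map f [a..<b])) x + count (mset (map f [b..<c])) x"
proof -
  have "[a..<c] = [a..<b] @ [b..<c]"
    using upt_add_eq_append[of a b "c - b"] assms by simp
  then show ?thesis by simp
qed

lemma concat_map_upt_blocks:
  "concat (map (\<lambda>i. map f [a + i * q..<a + i * q + q]) [0..<n]) = map f [a..<a + n * q]"
proof (induction n)
  case 0 then show ?case by simp
next
  case (Suc n)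
  have "[a..<a + n * q + q] = [a..<a + n * q] @ [a + n * q..<a + n * q + q]"
    by (rule upt_add_eq_append) simp
  then show ?case using Suc by (simp add: ac_simps)
qed

lemma count_mset_upt_blocks:
  "count (mset (map f [a..<a + n * q])) x = (\<Sum>i<n. count (mset (map f [a + i * q..<a + i * q + q])) x)"
  by (simp flip: concat_map_upt_blocks add: mset_concat sum_list_sum_nth atLeast0LessThan count_sum)

lemma nth_concat_equal_length:
  assumes "\<forall>u\<in>set us. length u = m" "i < length us"
  shows "us ! i = take m (drop (i * m) (concat us))"
  using assms
proof (induction us arbitrary: i)
  case Nil then show ?case by simp
next
  case (Cons u us)
  then show ?case by (cases i) auto
qed

lemma mset_eq_bool_listI:
  fixes xs ys :: "bool list"
  assumes "length xs = length ys" "count (mset xs) True = count (mset ys) True"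
  shows "mset xs = mset ys"
proof (rule multiset_eqI)
  have split: "count (mset zs) True + count (mset zs) False = length zs" for zs :: "bool list"
    by (induction zs) auto
  show "count (mset xs) b = count (mset ys) b" for b
    using assms split[of xs] split[of ys] by (induction b) simp_all
qed

lemma sigma_img_mult_add:
  assumes "t < N"
  shows "sigma_img N w (k * N + t) = (if t = 0 then None else Some (w k))"
  using assms by (simp add: sigma_img_def)

lemma count_sigma_img_prefix:
  assumes "N > 0" "t \<le> N"
  shows "count (mset (map (sigma_img N w) [0..<k * N + t])) None = k + of_bool (0 < t)"
    and "count (mset (map (sigma_img N w) [0..<k * N + t])) (Some b)
      = (N - 1) * count (mset (map w [0..<k])) b + (t - 1) * of_bool (w k = b)"
proof -
  let ?c = "\<lambda>n x. count (mset (map (sigma_img N w) [0..<n])) x"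
  let ?W = "\<lambda>k. count (mset (map w [0..<k])) b"
  have within_letter: "?c (k * N + t) None = k + of_bool (0 < t) \<and>
      ?c (k * N + t) (Some b) = (N - 1) * ?W k + (t - 1) * of_bool (w k = b)"
    if "?c (k * N) None = k" "?c (k * N) (Some b) = (N - 1) * ?W k" "t \<le> N" for k t
    using that(3)
  proof (induction t)
    case 0 then show ?case using that(1,2) by simp
  next
    case (Suc t)
    then have "sigma_img N w (k * N + t) = (if t = 0 then None else Some (w k))"
      by (intro sigma_img_mult_add) simp
    with Suc show ?case by (cases t) auto
  qed
  have "?c (k * N) None = k \<and> ?c (k * N) (Some b) = (N - 1) * ?W k" for k
  proof (induction k)
    case 0 then show ?case by simp
  next
    case (Suc k)
    then show ?case
      using within_letter[of k N] assms(1) by (simp add: add.commute)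
  qed
  then show "?c (k * N + t) None = k + of_bool (0 < t)"
    and "?c (k * N + t) (Some b) = (N - 1) * ?W k + (t - 1) * of_bool (w k = b)"
    using within_letter assms(2) by blast+
qed

lemma count_sigma_img_None_window:
  assumes "N > 0" "s \<le> N"
  shows "count (mset (map (sigma_img N w) [k * N + s..<(k + q) * N + s])) None = q"
proof -
  have "count (mset (map (sigma_img N w) [0..<(k + q) * N + s])) None
    = count (mset (map (sigma_img N w) [0..<k * N + s])) None
      + count (mset (map (sigma_img N w) [k * N + s..<(k + q) * N + s])) None"
    by (rule count_mset_upt_split) (simp_all add: algebra_simps)
  then show ?thesis by (simp only: count_sigma_img_prefix(1)[OF assms])
qed

text \<open>For s = 0 the window starts at a #, and the truncated s - 1 = 0 correctly drops the
  boundary correction.\<close>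

lemma count_sigma_img_Some_window:
  assumes "N > 0" "s \<le> N"
  shows "int (count (mset (map (sigma_img N w) [k * N + s..<(k + q) * N + s])) (Some b))
    = int (N - 1) * int (count (mset (map w [k..<k + q])) b)
      + int (s - 1) * (of_bool (w (k + q) = b) - of_bool (w k = b))"
proof -
  define c where "c i j = count (mset (map (sigma_img N w) [i..<j])) (Some b)" for i j
  define W where "W i j = count (mset (map w [i..<j])) b" for i j
  have "c 0 ((k + q) * N + s) = c 0 (k * N + s) + c (k * N + s) ((k + q) * N + s)"
    unfolding c_def by (rule count_mset_upt_split) (simp_all add: algebra_simps)
  then have "int (c (k * N + s) ((k + q) * N + s)) = int (c 0 ((k + q) * N + s)) - int (c 0 (k * N + s))"
    by simp
  also have "\<dots> = int (N - 1) * (int (W 0 (k + q)) - int (W 0 k))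
      + int (s - 1) * (of_bool (w (k + q) = b) - of_bool (w k = b))"
    unfolding c_def W_def count_sigma_img_prefix(2)[OF assms] of_nat_add of_nat_mult of_nat_of_bool
    by (simp add: algebra_simps)
  also have "int (W 0 (k + q)) - int (W 0 k) = int (W k (k + q))"
    using count_mset_upt_split[of 0 k "k + q" w b] unfolding W_def by simp
  finally show ?thesis unfolding c_def W_def .
qed

lemma odd_mult_eq_small_mult_imp_zero:
  fixes n r k d :: int
  assumes "odd n" "0 \<le> r" "r < n" "\<bar>d\<bar> \<le> 2" "n * k = r * d"
  shows "k = 0"
proof (rule ccontr)
  assume "k \<noteq> 0"
  have "n > 0" using assms(2,3) by simp
  then have eq: "n * \<bar>k\<bar> = r * \<bar>d\<bar>"
    using assms(2,5) by (metis abs_mult abs_of_nonneg abs_of_pos)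
  have "\<bar>k\<bar> < 2"
  proof (rule ccontr)
    assume "\<not> \<bar>k\<bar> < 2"
    then have "n * 2 \<le> n * \<bar>k\<bar>" using \<open>n > 0\<close> by simp
    moreover have "r * \<bar>d\<bar> \<le> r * 2" using assms(2,4) by (simp add: mult_left_mono)
    ultimately show False using eq assms(3) by linarith
  qed
  with \<open>k \<noteq> 0\<close> have "\<bar>k\<bar> = 1" by linarith
  then have "n = r * \<bar>d\<bar>" using eq by simp
  moreover have "\<bar>d\<bar> = 0 \<or> \<bar>d\<bar> = 1 \<or> \<bar>d\<bar> = 2" using assms(4) by linarith
  ultimately consider "n = 0" | "n = r" | "n = 2 * r" by auto
  then show False using assms(1,3) \<open>n > 0\<close> by cases auto
qed

lemma odd_combination_const_imp_const:
  fixes A X :: "nat \<Rightarrow> int"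
  assumes "odd n" "0 \<le> r" "r < n" "\<And>j. X j \<in> {0, 1}"
    and comb: "\<And>i. i < e \<Longrightarrow> n * A i + r * (X (Suc i) - X i) = C"
    and "i < e"
  shows "A i = A 0"
  using \<open>i < e\<close>
proof (induction i)
  case 0 then show ?case by simp
next
  case (Suc i)
  have "n * (A i - A (Suc i)) = r * (X (Suc (Suc i)) - 2 * X (Suc i) + X i)"
    using comb[of i] comb[of "Suc i"] Suc.prems by (simp add: algebra_simps)
  moreover have "\<bar>X (Suc (Suc i)) - 2 * X (Suc i) + X i\<bar> \<le> 2"
    using assms(4)[of i] assms(4)[of "Suc i"] assms(4)[of "Suc (Suc i)"] by auto
  ultimately have "A i - A (Suc i) = 0"
    using odd_mult_eq_small_mult_imp_zero assms(1-3) by blast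
  then show ?case using Suc by simp
qed

definition abelian_power_at :: "(nat \<Rightarrow> 'a) \<Rightarrow> nat \<Rightarrow> nat \<Rightarrow> nat \<Rightarrow> bool" where
  "abelian_power_at f P e m \<longleftrightarrow> 0 < e \<and> 0 < m \<and>
     (\<forall>i<e. mset (map f [P + i * m..<P + i * m + m]) = mset (map f [P..<P + m]))"

lemma abelian_power_at_imp_occurs:
  assumes "abelian_power_at f P e m"
  shows "\<exists>us. abelian_power us e m \<and> occurs_in (concat us) f"
proof (intro exI conjI)
  let ?us = "map (\<lambda>i. map f [P + i * m..<P + i * m + m]) [0..<e]"
  have "0 < e" "0 < m" and blocks: "\<And>i. i < e \<Longrightarrow>
      mset (map f [P + i * m..<P + i * m + m]) = mset (map f [P..<P + m])"
    using assms by (simp_all add: abelian_power_at_def)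
  have "hd ?us = map f [P..<P + m]"
    using \<open>0 < e\<close> by (simp add: hd_map)
  then show "abelian_power ?us e m"
    using \<open>0 < e\<close> \<open>0 < m\<close> blocks unfolding abelian_power_def abelian_equiv_def
    by (auto simp del: mset_map)
  show "occurs_in (concat ?us) f"
    unfolding occurs_in_def concat_map_upt_blocks by auto
qed

lemma occurs_imp_abelian_power_at:
  assumes "abelian_power us e m" "occurs_in (concat us) f"
  shows "\<exists>P. abelian_power_at f P e m"
proof -
  have "0 < e" and len: "length us = e" and nonempty: "\<forall>u\<in>set us. u \<noteq> []"
    and equiv: "\<forall>u\<in>set us. \<forall>v\<in>set us. mset u = mset v" and m: "m = length (hd us)"
    using assms(1) unfolding abelian_power_def abelian_equiv_def by blast+
  have hd: "hd us \<in> set us"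
    using len \<open>0 < e\<close> by auto
  have lengths: "\<forall>u\<in>set us. length u = m"
  proof
    fix u assume "u \<in> set us"
    then have "mset u = mset (hd us)" using equiv hd by blast
    then show "length u = m" unfolding m by (rule mset_eq_length)
  qed
  have "length (concat us) = e * m"
    using lengths len by (induction us arbitrary: e) auto
  with assms(2) obtain P where P: "concat us = map f [P..<P + e * m]"
    unfolding occurs_in_def by auto
  have block: "us ! i = map f [P + i * m..<P + i * m + m]" if "i < e" for i
  proof -
    have "Suc i * m \<le> e * m"
      using that by (intro mult_le_mono1) simp
    then show ?thesis
      using nth_concat_equal_length[OF lengths, of i] len that P
      by (simp add: take_map drop_map add.assoc add.commute)
  qed
  have "mset (map f [P + i * m..<P + i * m + m]) = mset (map f [P..<P + m])" if "i < e" for i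
  proof -
    have "us ! i \<in> set us" "us ! 0 \<in> set us" using that len \<open>0 < e\<close> by simp_all
    then have "mset (us ! i) = mset (us ! 0)" using equiv by blast
    then show ?thesis unfolding block[OF that] block[OF \<open>0 < e\<close>] by simp
  qed
  then show ?thesis
    using \<open>0 < e\<close> nonempty hd m unfolding abelian_power_at_def by auto
qed

lemma abelian_power_at_sigma_img_dvd_period:
  assumes "N > 0" "N \<le> e" "abelian_power_at (sigma_img N w) P e m"
  shows "N dvd m"
proof -
  let ?h = "count (mset (map (sigma_img N w) [P..<P + m])) None"
  have blocks: "mset (map (sigma_img N w) [P + i * m..<P + i * m + m]) = mset (map (sigma_img N w) [P..<P + m])"
    if "i < N" for i
    using assms(2,3) that unfolding abelian_power_at_def by simp
  have "count (mset (map (sigma_img N w) [P..<P + N * m])) None = N * ?h"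
    unfolding count_mset_upt_blocks by (simp add: blocks del: mset_map)
  moreover have "P + N * m = (P div N + m) * N + P mod N"
    by (simp add: algebra_simps)
  then have "count (mset (map (sigma_img N w) [P..<P + N * m])) None = m"
    using count_sigma_img_None_window[OF assms(1), of "P mod N" w "P div N" m] assms(1)
    by (simp add: less_imp_le)
  ultimately show ?thesis by (metis dvd_triv_left)
qed

lemma abelian_power_at_sigma_img_desubst:
  assumes "N > 0" "even N" "abelian_power_at (sigma_img N w) P e (N * q)"
  shows "abelian_power_at w (P div N) e q"
proof -
  define a s where "a = P div N" and "s = P mod N"
  define A where "A i = int (count (mset (map w [a + i * q..<a + i * q + q])) True)" for i
  define X where "X j = (of_bool (w (a + j * q)) :: int)" for j
  have "0 < e" "0 < q" and blocks: "\<And>i. i < e \<Longrightarrow>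
      mset (map (sigma_img N w) [P + i * (N * q)..<P + i * (N * q) + N * q])
      = mset (map (sigma_img N w) [P..<P + N * q])"
    using assms(3) unfolding abelian_power_at_def by simp_all
  have "s < N" "2 \<le> N" using assms(1,2) by (simp_all add: s_def) presburger
  have window: "int (count (mset (map (sigma_img N w) [P + i * (N * q)..<P + i * (N * q) + N * q])) (Some True))
      = int (N - 1) * A i + int (s - 1) * (X (Suc i) - X i)" for i
  proof -
    have "P + i * (N * q) = (a + i * q) * N + s" "P + i * (N * q) + N * q = (a + i * q + q) * N + s"
      by (simp_all add: a_def s_def algebra_simps)
    then show ?thesis
      using count_sigma_img_Some_window[OF assms(1), of s w "a + i * q" q True] \<open>s < N\<close>
      by (simp add: A_def X_def algebra_simps)
  qed
  have comb: "int (N - 1) * A i + int (s - 1) * (X (Suc i) - X i)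
      = int (count (mset (map (sigma_img N w) [P..<P + N * q])) (Some True))" if "i < e" for i
    by (simp only: window[of i, symmetric] blocks[OF that])
  have "odd (int (N - 1))" "int (s - 1) < int (N - 1)"
    using assms(2) \<open>s < N\<close> \<open>2 \<le> N\<close> by auto
  then have "A i = A 0" if "i < e" for i
    using odd_combination_const_imp_const[where n = "int (N - 1)" and r = "int (s - 1)" and X = X,
        OF _ _ _ _ comb that] by (simp add: X_def)
  then have "mset (map w [a + i * q..<a + i * q + q]) = mset (map w [a..<a + q])" if "i < e" for i
    by (intro mset_eq_bool_listI) (use that in \<open>simp_all add: A_def\<close>)
  then show ?thesis
    using \<open>0 < e\<close> \<open>0 < q\<close> unfolding abelian_power_at_def a_def by blast
qed

theorem lemma3:
  fixes N e m :: nat and w :: "nat \<Rightarrow> bool" and us :: "bool option list list"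
  assumes "N > 0" and "even N"
    and "abelian_power us e m" and "e \<ge> N"
    and "occurs_in (concat us) (sigma_img N w)"
  shows "\<exists>vs. abelian_power vs e (m div N) \<and> N * (m div N) = m \<and> occurs_in (concat vs) w"
proof -
  obtain P where P: "abelian_power_at (sigma_img N w) P e m"
    using occurs_imp_abelian_power_at[OF assms(3,5)] ..
  then have "N dvd m"
    using abelian_power_at_sigma_img_dvd_period[OF assms(1,4)] by blast
  then obtain q where m: "m = N * q" ..
  with P have "abelian_power_at w (P div N) e q"
    using abelian_power_at_sigma_img_desubst[OF assms(1,2)] by simp
  moreover have "m div N = q"
    using m assms(1) by simp
  ultimately show ?thesis
    using abelian_power_at_imp_occurs m by auto
qed

end
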